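(* Let $k\ge 2$, $n\ge1$, and let $L_n$ and $\varphi:L_n\to E^{n-1}$ be as in the context. Then $\varphi$ is injective.
   Context: $E=\{0,\dots,k-1\}$. For $\mathbf a\in E^n$, $w(\mathbf a)=a_1+\dots+a_n$, and $\mathcal B_t=\{\mathbf a\in E^n: w(\mathbf a)=t\}$. Let $g=\lfloor n(k-1)/2\rfloor$ and $C_i=\{\mathbf a\in E^n: a_1=i\}$. Define $L_n=(\mathcal B_0\cup\dots\cup\mathcal B_g)\cap(C_0\cup C_{k-1})$ if $n(k-1)$ is odd, and $L_n=((\mathcal B_0\cup\dots\cup\mathcal B_{g-1})\cap(C_0\cup C_{k-1}))\cup(\mathcal B_g\cap C_0)$ if $n(k-1)$ is even. For $a\in E$ let $\overline a=k-1-a$. Define $\varphi(a_1,\dots,a_n)=(a_2,\dots,a_n)$ if $a_1=0$ and $\varphi(a_1,\dots,a_n)=(\overline{a}_2,\dots,\overline{a}_n)$ if $a_1=k-1$. *)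

theory Defs
  imports Main
begin

text \<open>Words of length n over E = {0,...,k-1}, represented as lists; a_1 is the head.\<close>
definition E_n :: "nat \<Rightarrow> nat \<Rightarrow> nat list set" where
  "E_n k n = {a. length a = n \<and> (\<forall>x\<in>set a. x < k)}"

definition weight :: "nat list \<Rightarrow> nat" where
  "weight a = sum_list a"

definition layer :: "nat \<Rightarrow> nat \<Rightarrow> nat \<Rightarrow> nat list set" where
  "layer k n t = {a \<in> E_n k n. weight a = t}"

definition Cset :: "nat \<Rightarrow> nat \<Rightarrow> nat \<Rightarrow> nat list set" where
  "Cset k n i = {a \<in> E_n k n. a ! 0 = i}"

definition Lset :: "nat \<Rightarrow> nat \<Rightarrow> nat list set" where
  "Lset k n = (let g = n * (k - 1) div 2 in
     if odd (n * (k - 1))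
     then (\<Union>t\<in>{0..g}. layer k n t) \<inter> (Cset k n 0 \<union> Cset k n (k - 1))
     else ((\<Union>t\<in>{0..<g}. layer k n t) \<inter> (Cset k n 0 \<union> Cset k n (k - 1)))
          \<union> (layer k n g \<inter> Cset k n 0))"

definition bar :: "nat \<Rightarrow> nat \<Rightarrow> nat" where
  "bar k a = k - 1 - a"

definition phi :: "nat \<Rightarrow> nat list \<Rightarrow> nat list" where
  "phi k a = (if a ! 0 = 0 then tl a else map (bar k) (tl a))"

end

theory Submission
  imports Defs
begin

text \<open>Complementing the letters of a word in \<open>L\<^sub>n\<close> is undone by complementing again, so
  \<open>\<phi>\<close> can only identify a word beginning with \<open>0\<close> and a word beginning with \<open>k - 1\<close>.
  Their tails are then complements of each other, so their weights add up to \<open>n(k - 1)\<close>;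
  but every word of \<open>L\<^sub>n\<close> has weight at most \<open>n(k - 1)/2\<close>, with strict inequality when it
  begins with \<open>k - 1\<close> (this is why the middle layer is only taken from \<open>C\<^sub>0\<close>).\<close>

lemma Lset_iff:
  "a \<in> Lset k n \<longleftrightarrow> a \<in> E_n k n \<and>
     (a ! 0 = 0 \<and> 2 * weight a \<le> n * (k - 1) \<or> a ! 0 = k - 1 \<and> 2 * weight a < n * (k - 1))"
proof -
  define N where "N = n * (k - 1)"
  show ?thesis
  proof (cases "odd N")
    case True
    then have "weight a \<le> N div 2 \<longleftrightarrow> 2 * weight a < N" "weight a \<le> N div 2 \<longleftrightarrow> 2 * weight a \<le> N"
      by presburger+
    with True show ?thesis
      unfolding Lset_def Let_def N_def[symmetric] by (auto simp: layer_def Cset_def)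
  next
    case False
    then have "weight a < N div 2 \<longleftrightarrow> 2 * weight a < N" "weight a \<le> N div 2 \<longleftrightarrow> 2 * weight a \<le> N"
      by presburger+
    with False show ?thesis
      unfolding Lset_def Let_def N_def[symmetric] by (auto simp: layer_def Cset_def)
  qed
qed

lemma bar_bar [simp]: "x < k \<Longrightarrow> bar k (bar k x) = x"
  by (simp add: bar_def)

lemma inj_on_map_bar: "inj_on (map (bar k)) {xs. \<forall>x\<in>set xs. x < k}"
  by (rule inj_on_inverseI[where g = "map (bar k)"]) (simp add: map_idI)

lemma sum_list_map_bar:
  "\<forall>x\<in>set xs. x < k \<Longrightarrow> sum_list (map (bar k) xs) + sum_list xs = length xs * (k - 1)"
  by (induction xs) (auto simp: bar_def)

lemma E_n_SucE:
  assumes "a \<in> E_n k (Suc m)"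
  obtains x xs where "a = x # xs" "x < k" "xs \<in> E_n k m"
  using assms by (cases a) (auto simp: E_n_def)

lemma map_bar_in_E_n: "xs \<in> E_n k m \<Longrightarrow> map (bar k) xs \<in> E_n k m"
  by (auto simp: E_n_def bar_def)

lemma weight_complement:
  assumes "ys \<in> E_n k m"
  shows "weight (0 # map (bar k) ys) + weight ((k - 1) # ys) = Suc m * (k - 1)"
  using sum_list_map_bar[of ys k] assms by (simp add: E_n_def weight_def)

lemma Lset_not_complementary:
  assumes "0 # map (bar k) ys \<in> Lset k (Suc m)" "(k - 1) # ys \<in> Lset k (Suc m)" "ys \<in> E_n k m"
    and "2 \<le> k"
  shows False
proof -
  have "2 * weight (0 # map (bar k) ys) \<le> Suc m * (k - 1)"
    using assms(1) unfolding Lset_iff by auto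
  moreover have "2 * weight ((k - 1) # ys) < Suc m * (k - 1)"
    using assms(2,4) unfolding Lset_iff by auto
  ultimately show False
    using weight_complement[OF assms(3)] by linarith
qed

lemma phi_inj_on_Lset: "inj_on (phi k) (Lset k (Suc m))"
proof (rule inj_onI)
  fix a b assume aL: "a \<in> Lset k (Suc m)" and bL: "b \<in> Lset k (Suc m)"
    and phi_eq: "phi k a = phi k b"
  obtain x xs where a: "a = x # xs" "xs \<in> E_n k m"
    using aL by (auto simp: Lset_iff elim: E_n_SucE)
  obtain y ys where b: "b = y # ys" "ys \<in> E_n k m"
    using bL by (auto simp: Lset_iff elim: E_n_SucE)
  have x: "x = 0 \<or> x = k - 1" and y: "y = 0 \<or> y = k - 1"
    using aL bL by (auto simp: Lset_iff a b)
  consider "x = 0" "y = 0" | "x \<noteq> 0" "y \<noteq> 0" | "x = 0" "y \<noteq> 0" | "x \<noteq> 0" "y = 0"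
    by blast
  then show "a = b"
  proof cases
    case 1
    then show ?thesis using phi_eq by (simp add: a b phi_def)
  next
    case 2
    then have "map (bar k) xs = map (bar k) ys" using phi_eq by (simp add: a b phi_def)
    then have "xs = ys"
      using inj_on_map_bar[of k] a(2) b(2) by (auto simp: E_n_def inj_on_def)
    then show ?thesis using 2 x y by (simp add: a b)
  next
    case 3
    then have "xs = map (bar k) ys" "y = k - 1" using phi_eq y by (simp_all add: a b phi_def)
    moreover have "2 \<le> k" using 3 \<open>y = k - 1\<close> by simp
    ultimately show ?thesis
      using Lset_not_complementary[of k ys m] aL bL b(2) 3 by (simp add: a b)
  next
    case 4
    then have "ys = map (bar k) xs" "x = k - 1" using phi_eq x by (simp_all add: a b phi_def)
    moreover have "2 \<le> k" using 4 \<open>x = k - 1\<close> by simp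
    ultimately show ?thesis
      using Lset_not_complementary[of k xs m] aL bL a(2) 4 by (simp add: a b)
  qed
qed

lemma phi_in_E_n: "a \<in> E_n k (Suc m) \<Longrightarrow> phi k a \<in> E_n k m"
  by (auto simp: phi_def map_bar_in_E_n elim: E_n_SucE)

theorem lemma2:
  fixes k n :: nat
  assumes "k \<ge> 2" and "n \<ge> 1"
  shows "inj_on (phi k) (Lset k n) \<and> phi k ` Lset k n \<subseteq> E_n k (n - 1)"
proof -
  obtain m where n: "n = Suc m" using \<open>n \<ge> 1\<close> by (cases n) auto
  show ?thesis
    unfolding n using phi_inj_on_Lset phi_in_E_n by (auto simp: Lset_iff)
qed

end
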